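(* Let $q$ be a prime power and $m,n$ positive integers. For every primitive polynomial $f(X)\in\mathbb{F}_q[X]$ of degree $mn$ there exists an $(m,n)$-block companion matrix $T$ over $\mathbb{F}_q$ with $T\in \mathrm{GL}_{mn}(\mathbb{F}_q)$, $o(T)=q^{mn}-1$, and $\det(XI_{mn}-T)=f(X)$. In other words, the map $\Psi$ sending a matrix $T\in\mathrm{BCM}(m,n;q)\cap\mathrm{GL}_{mn}(\mathbb{F}_q)$ with $o(T)=q^{mn}-1$ to its characteristic polynomial $\det(XI_{mn}-T)$ is a surjection onto the set of primitive polynomials of degree $mn$ in $\mathbb{F}_q[X]$.
   Context: A monic polynomial $f(X)\in\mathbb{F}_q[X]$ of degree $d$ is primitive if $f(0)\neq 0$ and the least positive integer $e$ with $f(X)\mid X^e-1$ equals $q^d-1$. For $T\in\mathrm{GL}_{mn}(\mathbb{F}_q)$, $o(T)$ is its order in this group. An $(m,n)$-block companion matrix over $\mathbb{F}_q$ is an $mn\times mn$ matrix, written in $n\times n$ blocks of size $m\times m$, whose last block column is $(C_0,C_1,\dots,C_{n-1})^{T}$ for some $C_0,\dots,C_{n-1}\in M_m(\mathbb{F}_q)$, whose block in position $(i+1,i)$ is the identity $I_m$ for $i=1,\dots,n-1$, and all of whose other blocks are zero; $\mathrm{BCM}(m,n;q)$ denotes the set of all such matrices. *)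

theory Defs
  imports "Jordan_Normal_Form.Char_Poly"
begin

text \<open>Finite field F_q is modelled by a type 'a of class finite field; q = card (UNIV :: 'a set).\<close>

definition primitive_poly :: "'a::{field,finite} poly \<Rightarrow> nat \<Rightarrow> bool" where
  "primitive_poly f d \<longleftrightarrow>
     monic f \<and> degree f = d \<and> poly f 0 \<noteq> 0 \<and>
     (LEAST e::nat. 0 < e \<and> f dvd (monom 1 e - 1)) = card (UNIV :: 'a set) ^ d - 1"

definition mat_order :: "'a::field mat \<Rightarrow> nat" where
  "mat_order T = (LEAST e::nat. 0 < e \<and> T ^\<^sub>m e = 1\<^sub>m (dim_row T))"

text \<open>(m,n)-block companion matrix with last block column C 0, ..., C (n-1)
  (blocks indexed from 0); identity blocks at block positions (k+1,k).\<close>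
definition block_companion :: "nat \<Rightarrow> nat \<Rightarrow> (nat \<Rightarrow> 'a::field mat) \<Rightarrow> 'a mat" where
  "block_companion m n C = mat (m*n) (m*n) (\<lambda>(i,j).
     if j div m = n - 1 then C (i div m) $$ (i mod m, j mod m)
     else if i div m = j div m + 1 then (if i mod m = j mod m then 1 else 0)
     else 0)"

definition BCM :: "nat \<Rightarrow> nat \<Rightarrow> 'a::field mat set" where
  "BCM m n = {block_companion m n C | C. \<forall>k<n. C k \<in> carrier_mat m m}"

end

theory Submission
  imports Defs
begin

text \<open>Read an index i = k m + a (block k, row a < m) of an mn-dimensional space as a n + k.
  Reindexing the ordinary companion matrix C of f by this permutation yields an (m,n)-block
  companion matrix T. So T is similar to C: its characteristic polynomial is f, and its order is
  that of C, which is the order of X modulo f, because C acts on coordinate vectors of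
  polynomials of degree < mn as multiplication by X modulo f. For primitive f this order is
  q^(mn) - 1, and f(0) \<noteq> 0 makes T invertible.\<close>

lemma similar_mat_reindex:
  fixes B :: "'a::comm_ring_1 mat"
  assumes B: "B \<in> carrier_mat N N" and p: "bij_betw p {..<N} {..<N}"
  shows "similar_mat (mat N N (\<lambda>(i, j). B $$ (p i, p j))) B"
proof (rule similar_matI)
  define P :: "'a mat" where "P = mat N N (\<lambda>(i, k). if p i = k then 1 else 0)"
  have p_less: "p i < N" if "i < N" for i using p that by (auto dest: bij_betw_apply)
  have p_eq: "p i = p j \<longleftrightarrow> i = j" if "i < N" "j < N" for i j
    using p that by (auto dest: bij_betw_imp_inj_on inj_onD)
  have reindex: "(\<Sum>i<N. g (p i)) = (\<Sum>k<N. g k)" for g :: "nat \<Rightarrow> 'a"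
    using sum.reindex_bij_betw[OF p] .
  show "{mat N N (\<lambda>(i, j). B $$ (p i, p j)), B, P, transpose_mat P} \<subseteq> carrier_mat N N"
    using B by (auto simp: P_def)
  show "P * transpose_mat P = 1\<^sub>m N"
    by (rule eq_matI)
      (auto simp: P_def scalar_prod_def p_eq p_less if_distrib[of "\<lambda>x. x * _"] sum.delta cong: if_cong)
  show "transpose_mat P * P = 1\<^sub>m N"
  proof (rule eq_matI)
    fix k l assume "k < dim_row (1\<^sub>m N :: 'a mat)" "l < dim_col (1\<^sub>m N :: 'a mat)"
    then have "k < N" "l < N" by simp_all
    have "(transpose_mat P * P) $$ (k, l)
        = (\<Sum>i<N. (if p i = k then 1 else 0) * (if p i = l then 1 else 0))"
      using \<open>k < N\<close> \<open>l < N\<close> by (simp add: P_def scalar_prod_def atLeast0LessThan)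
    also have "\<dots> = (\<Sum>x<N. (if x = k then 1 else 0) * (if x = l then 1 else 0))"
      by (rule reindex)
    finally show "(transpose_mat P * P) $$ (k, l) = 1\<^sub>m N $$ (k, l)"
      using \<open>k < N\<close> \<open>l < N\<close> by (simp add: if_distrib[of "\<lambda>x. x * _"] sum.delta cong: if_cong)
  qed (simp_all add: P_def)
  show "mat N N (\<lambda>(i, j). B $$ (p i, p j)) = P * B * transpose_mat P"
  proof (rule eq_matI)
    fix i j assume "i < dim_row (P * B * transpose_mat P)" "j < dim_col (P * B * transpose_mat P)"
    then have "i < N" "j < N" by (simp_all add: P_def)
    have "(P * B) $$ (i, l) = B $$ (p i, l)" if "l < N" for l
      using \<open>i < N\<close> that B p_less[OF \<open>i < N\<close>]
      by (simp add: P_def scalar_prod_def atLeast0LessThan if_distrib[of "\<lambda>x. x * _"] sum.delta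
          cong: if_cong)
    then show "mat N N (\<lambda>(i, j). B $$ (p i, p j)) $$ (i, j) = (P * B * transpose_mat P) $$ (i, j)"
      using \<open>i < N\<close> \<open>j < N\<close> B p_less[OF \<open>j < N\<close>]
      by (simp add: P_def scalar_prod_def atLeast0LessThan if_distrib[of "\<lambda>x. _ * x"] sum.delta
          cong: if_cong)
  qed (simp_all add: P_def)
qed

lemma similar_mat_pow_eq_one:
  assumes "similar_mat A B" and "B ^\<^sub>m k = 1\<^sub>m (dim_row B)"
  shows "A ^\<^sub>m k = 1\<^sub>m (dim_row A)"
proof -
  obtain P Q where wit: "similar_mat_wit A B P Q"
    using assms(1) unfolding similar_mat_def by blast
  note carriers = similar_mat_witD[OF refl wit]
  have "dim_row B = dim_row A" using carriers(5) by simp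
  have "A ^\<^sub>m k = P * B ^\<^sub>m k * Q" by (rule similar_mat_wit_pow_id[OF wit])
  also have "\<dots> = P * Q"
    unfolding assms(2) \<open>dim_row B = dim_row A\<close> using carriers(6) by simp
  finally show ?thesis using carriers(1) by simp
qed

lemma mat_order_similar:
  assumes "similar_mat A B" shows "mat_order A = mat_order B"
proof -
  have "A ^\<^sub>m e = 1\<^sub>m (dim_row A) \<longleftrightarrow> B ^\<^sub>m e = 1\<^sub>m (dim_row B)" for e
    using similar_mat_pow_eq_one[OF assms] similar_mat_pow_eq_one[OF similar_mat_sym[OF assms]]
    by blast
  then show ?thesis unfolding mat_order_def by simp
qed

lemma invertible_mat_if_char_poly_nonzero_at_0:
  fixes A :: "'a::field mat"
  assumes A: "A \<in> carrier_mat n n" and "poly (char_poly A) 0 \<noteq> 0"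
  shows "invertible_mat A"
proof -
  have "char_matrix A 0 = A"
    using A by (auto simp: char_matrix_def)
  then have "det (- A) \<noteq> 0"
    using assms char_poly_matrix[OF A, of 0] by simp
  then have "det A \<noteq> 0" using det_0_negate[OF A] by simp
  from det_non_zero_imp_unit[OF A this, of "()"]
  obtain B where "B \<in> carrier_mat n n" "B * A = 1\<^sub>m n" "A * B = 1\<^sub>m n"
    unfolding Units_def ring_mat_def by auto
  then show ?thesis
    using A unfolding invertible_mat_def inverts_mat_def by auto
qed

definition companion_mat :: "nat \<Rightarrow> (nat \<Rightarrow> 'a::comm_ring_1) \<Rightarrow> 'a mat" where
  "companion_mat N c = mat N N (\<lambda>(i, j). if j = N - 1 then - c i else if i = j + 1 then 1 else 0)"

lemma companion_mat_dim [simp]: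
  "dim_row (companion_mat N c) = N" "dim_col (companion_mat N c) = N"
  by (simp_all add: companion_mat_def)

lemma companion_mat_carrier [simp]: "companion_mat N c \<in> carrier_mat N N"
  by (simp add: carrier_matI)

lemma char_poly_companion_mat:
  assumes "0 < N"
  shows "char_poly (companion_mat N c) = monom 1 N + (\<Sum>i<N. monom (c i) i)"
  using assms
proof (induction N arbitrary: c rule: nat_induct_non_zero)
  case 1
  have "char_poly (companion_mat 1 c) = [:c 0, 1:]"
    unfolding char_poly_def
    by (subst det_single) (auto simp: companion_mat_def char_poly_matrix_def)
  then show ?case by (simp add: monom_Suc monom_0)
next
  case (Suc N)
  let ?M = "char_poly_matrix (companion_mat (Suc N) c)"
  have M: "?M \<in> carrier_mat (Suc N) (Suc N)" by simp
  have row0: "?M $$ (0, j) = (if j = 0 then [:0, 1:] else 0) + (if j = N then [:c 0:] else 0)"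
    if "j < Suc N" for j
    using that Suc.hyps by (auto simp: companion_mat_def char_poly_matrix_def)
  have "det ?M = (\<Sum>j<Suc N. ?M $$ (0, j) * cofactor ?M 0 j)"
    by (rule laplace_expansion_row[OF M]) simp
  also have "\<dots> = [:0, 1:] * cofactor ?M 0 0 + [:c 0:] * cofactor ?M 0 N"
    using Suc.hyps
    by (simp add: row0 distrib_right sum.distrib if_distrib[of "\<lambda>x. x * _"] cong: if_cong)
  finally have laplace: "det ?M = [:0, 1:] * cofactor ?M 0 0 + [:c 0:] * cofactor ?M 0 N" .
  have minor00: "mat_delete ?M 0 0 = char_poly_matrix (companion_mat N (\<lambda>i. c (Suc i)))"
    using Suc.hyps by (intro eq_matI) (auto simp: companion_mat_def char_poly_matrix_def mat_delete_def)
  have minor0N: "det (mat_delete ?M 0 N) = (-1) ^ N"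
  proof -
    let ?D = "mat_delete ?M 0 N"
    have D: "?D \<in> carrier_mat N N" using mat_delete_carrier[OF M] by simp
    have "upper_triangular ?D"
      unfolding upper_triangular_def by (auto simp: companion_mat_def char_poly_matrix_def mat_delete_def)
    then have "det ?D = prod_list (diag_mat ?D)" by (rule det_upper_triangular[OF _ D])
    also have "\<dots> = (\<Prod>i = 0..<N. -1)" unfolding prod_list_diag_prod
      by (rule prod.cong) (auto simp: companion_mat_def char_poly_matrix_def mat_delete_def one_pCons)
    finally show ?thesis by simp
  qed
  have "char_poly (companion_mat (Suc N) c)
      = [:0, 1:] * (monom 1 N + (\<Sum>i<N. monom (c (Suc i)) i)) + [:c 0:]"
    unfolding char_poly_def laplace cofactor_def minor00 minor0N Suc.IH[symmetric]
    by (simp add: char_poly_def flip: power_add mult_2)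
  also have "\<dots> = monom 1 (Suc N) + (\<Sum>i<Suc N. monom (c i) i)"
    unfolding sum.lessThan_Suc_shift
    by (simp add: distrib_left sum_distrib_left monom_Suc monom_0 mult_pCons_left)
  finally show ?case .
qed

lemma char_poly_companion_mat_poly:
  assumes "monic f" and "0 < degree f"
  shows "char_poly (companion_mat (degree f) (coeff f)) = f"
proof -
  have "char_poly (companion_mat (degree f) (coeff f)) = (\<Sum>i<Suc (degree f). monom (coeff f i) i)"
    using assms by (simp add: char_poly_companion_mat)
  also have "\<dots> = f"
    unfolding lessThan_Suc_atMost by (rule poly_as_sum_of_monoms)
  finally show ?thesis .
qed

lemma companion_mat_mult_vec_index:
  assumes w: "w \<in> carrier_vec N" and j: "j < N"
  shows "(companion_mat N c *\<^sub>v w) $ j = (if j = 0 then 0 else w $ (j - 1)) - c j * w $ (N - 1)"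
proof -
  have "(companion_mat N c *\<^sub>v w) $ j
      = (\<Sum>k\<in>{0..<N}. (if k = N - 1 then - c j else if j = k + 1 then 1 else 0) * w $ k)"
    using w j by (simp add: companion_mat_def scalar_prod_def)
  also have "\<dots> = (\<Sum>k\<in>{0..<N}. (if k = j - 1 \<and> j \<noteq> 0 then w $ k else 0)
      + (if k = N - 1 then - c j * w $ k else 0))"
    using j by (intro sum.cong) auto
  also have "\<dots> = (if j = 0 then 0 else w $ (j - 1)) - c j * w $ (N - 1)"
    using j by (simp add: sum.distrib sum.delta)
  finally show ?thesis .
qed

definition poly_of_vec :: "'a::comm_ring_1 vec \<Rightarrow> 'a poly" where
  "poly_of_vec w = (\<Sum>i<dim_vec w. monom (w $ i) i)"

lemma coeff_poly_of_vec: "coeff (poly_of_vec w) j = (if j < dim_vec w then w $ j else 0)"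
  unfolding poly_of_vec_def coeff_sum coeff_monom by (simp add: sum.delta')

lemma degree_poly_of_vec_less: "0 < dim_vec w \<Longrightarrow> degree (poly_of_vec w) < dim_vec w"
  by (rule degree_lessI) (auto simp: coeff_poly_of_vec)

lemma poly_of_vec_inject:
  assumes "dim_vec v = dim_vec w" and "poly_of_vec v = poly_of_vec w"
  shows "v = w"
proof (rule eq_vecI)
  show "v $ i = w $ i" if "i < dim_vec w" for i
    using arg_cong[OF assms(2), of "\<lambda>p. coeff p i"] that assms(1) by (simp add: coeff_poly_of_vec)
qed (use assms in simp)

lemma poly_of_vec_unit_vec_0: "0 < N \<Longrightarrow> poly_of_vec (unit_vec N 0) = 1"
  by (rule poly_eqI) (auto simp: coeff_poly_of_vec coeff_1)

context
  fixes f :: "'a::field poly"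
  assumes monic: "monic f" and degree_pos: "0 < degree f"
begin

lemma poly_of_vec_companion_mat_mult_vec:
  assumes w: "w \<in> carrier_vec (degree f)"
  shows "poly_of_vec (companion_mat (degree f) (coeff f) *\<^sub>v w) = [:0, 1:] * poly_of_vec w mod f"
proof -
  let ?N = "degree f" and ?p = "poly_of_vec w" and ?s = "w $ (degree f - 1)"
  let ?Cw = "companion_mat (degree f) (coeff f) *\<^sub>v w"
  have Cw: "poly_of_vec ?Cw = pCons 0 ?p - Polynomial.smult ?s f"
  proof (rule poly_eqI)
    fix j
    consider "j < ?N" | "j = ?N" | "?N < j" by linarith
    then show "coeff (poly_of_vec ?Cw) j = coeff (pCons 0 ?p - Polynomial.smult ?s f) j"
    proof cases
      case 1
      then show ?thesis
        using w companion_mat_mult_vec_index[OF w 1] by (cases j) (auto simp: coeff_poly_of_vec)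
    next
      case 2
      then show ?thesis
        using w monic degree_pos by (cases "degree f") (auto simp: coeff_poly_of_vec)
    next
      case 3
      then show ?thesis
        using w by (cases j) (auto simp: coeff_poly_of_vec coeff_eq_0)
    qed
  qed
  have "[:0, 1:] * ?p mod f = (pCons 0 ?p - Polynomial.smult ?s f) mod f"
    unfolding mod_eq_dvd_iff by (simp add: dvd_smult)
  also have "\<dots> = poly_of_vec ?Cw"
    unfolding Cw[symmetric] using w degree_pos degree_poly_of_vec_less[of ?Cw]
    by (intro mod_poly_less) simp
  finally show ?thesis by simp
qed

lemma poly_of_vec_companion_mat_pow_mult_vec:
  assumes "w \<in> carrier_vec (degree f)"
  shows "poly_of_vec (companion_mat (degree f) (coeff f) ^\<^sub>m e *\<^sub>v w) = monom 1 e * poly_of_vec w mod f"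
  using assms
proof (induction e arbitrary: w)
  case 0
  then show ?case
    using degree_pos degree_poly_of_vec_less[of w] by (simp add: mod_poly_less)
next
  case (Suc e)
  let ?C = "companion_mat (degree f) (coeff f)"
  have "?C ^\<^sub>m Suc e *\<^sub>v w = ?C ^\<^sub>m e *\<^sub>v (?C *\<^sub>v w)"
    using assoc_mult_mat_vec[OF pow_carrier_mat[OF companion_mat_carrier] companion_mat_carrier Suc.prems]
    by simp
  then have "poly_of_vec (?C ^\<^sub>m Suc e *\<^sub>v w) = monom 1 e * ([:0, 1:] * poly_of_vec w mod f) mod f"
    using Suc.IH[OF mult_mat_vec_carrier[OF companion_mat_carrier Suc.prems]]
    by (simp add: poly_of_vec_companion_mat_mult_vec[OF Suc.prems])
  also have "\<dots> = monom 1 (Suc e) * poly_of_vec w mod f"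
    by (simp add: mod_mult_right_eq monom_Suc mult_pCons_left mult_pCons_right)
  finally show ?case .
qed

lemma companion_mat_pow_eq_one_iff:
  "companion_mat (degree f) (coeff f) ^\<^sub>m e = 1\<^sub>m (degree f) \<longleftrightarrow> f dvd monom 1 e - 1"
proof
  let ?C = "companion_mat (degree f) (coeff f)"
  assume "?C ^\<^sub>m e = 1\<^sub>m (degree f)"
  then have "monom 1 e * 1 mod f = 1"
    using poly_of_vec_companion_mat_pow_mult_vec[of "unit_vec (degree f) 0" e] degree_pos
    by (simp add: poly_of_vec_unit_vec_0)
  also have "1 = 1 mod f"
    using degree_pos by (simp add: mod_poly_less)
  finally show "f dvd monom 1 e - 1" unfolding mod_eq_dvd_iff by simp
next
  let ?C = "companion_mat (degree f) (coeff f)"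
  assume dvd: "f dvd monom 1 e - 1"
  have fixes_vec: "?C ^\<^sub>m e *\<^sub>v w = w" if w: "w \<in> carrier_vec (degree f)" for w
  proof (rule poly_of_vec_inject)
    show "dim_vec (?C ^\<^sub>m e *\<^sub>v w) = dim_vec w" using w by simp
    have "f dvd monom 1 e * poly_of_vec w - poly_of_vec w"
      using dvd_mult2[OF dvd, of "poly_of_vec w"] by (simp add: algebra_simps)
    then have "monom 1 e * poly_of_vec w mod f = poly_of_vec w mod f"
      unfolding mod_eq_dvd_iff .
    also have "\<dots> = poly_of_vec w"
      using w degree_pos degree_poly_of_vec_less[of w] by (simp add: mod_poly_less)
    finally show "poly_of_vec (?C ^\<^sub>m e *\<^sub>v w) = poly_of_vec w"
      using poly_of_vec_companion_mat_pow_mult_vec[OF w] by simp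
  qed
  show "?C ^\<^sub>m e = 1\<^sub>m (degree f)"
  proof (rule eq_matI)
    fix i j assume "i < dim_row (1\<^sub>m (degree f) :: 'a mat)" "j < dim_col (1\<^sub>m (degree f) :: 'a mat)"
    then have "i < degree f" "j < degree f" by simp_all
    then have "(?C ^\<^sub>m e) $$ (i, j) = (?C ^\<^sub>m e *\<^sub>v unit_vec (degree f) j) $ i"
      using pow_carrier_mat[OF companion_mat_carrier] by simp
    then show "(?C ^\<^sub>m e) $$ (i, j) = 1\<^sub>m (degree f) $$ (i, j)"
      using fixes_vec[of "unit_vec (degree f) j"] \<open>i < degree f\<close> \<open>j < degree f\<close> by simp
  qed simp_all
qed

lemma mat_order_companion_mat:
  "mat_order (companion_mat (degree f) (coeff f)) = (LEAST e. 0 < e \<and> f dvd monom 1 e - 1)"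
  unfolding mat_order_def by (simp add: companion_mat_pow_eq_one_iff)

end

lemma mult_add_eq_mult_add_iff:
  fixes a b a' b' n :: nat
  assumes "b < n" and "b' < n"
  shows "a * n + b = a' * n + b' \<longleftrightarrow> a = a' \<and> b = b'"
proof
  assume eq: "a * n + b = a' * n + b'"
  have "b = b'" using arg_cong[OF eq, of "\<lambda>x. x mod n"] assms by simp
  moreover have "a = a'" using arg_cong[OF eq, of "\<lambda>x. x div n"] assms by simp
  ultimately show "a = a' \<and> b = b'" by simp
qed simp

definition swap_index :: "nat \<Rightarrow> nat \<Rightarrow> nat \<Rightarrow> nat" where
  "swap_index m n i = (i mod m) * n + i div m"

lemma swap_index_less:
  assumes "i < m * n" shows "swap_index m n i < m * n"
proof -
  have "0 < m" using assms by (cases m) auto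
  have "i div m < n" using assms by (simp add: less_mult_imp_div_less mult.commute)
  then have "(i mod m) * n + i div m < (i mod m + 1) * n" by simp
  also have "\<dots> \<le> m * n" using \<open>0 < m\<close> by (intro mult_le_mono1) (simp add: Suc_leI)
  finally show ?thesis unfolding swap_index_def .
qed

lemma swap_index_swap_index:
  assumes "i < m * n" shows "swap_index n m (swap_index m n i) = i"
proof -
  have "i div m < n" using assms by (simp add: less_mult_imp_div_less mult.commute)
  then show ?thesis by (simp add: swap_index_def)
qed

lemma bij_betw_swap_index: "bij_betw (swap_index m n) {..<m * n} {..<m * n}"
proof (rule bij_betw_byWitness[where f' = "swap_index n m"])
  show "\<forall>i\<in>{..<m * n}. swap_index n m (swap_index m n i) = i"
    by (simp add: swap_index_swap_index)
  show "\<forall>i\<in>{..<m * n}. swap_index m n (swap_index n m i) = i"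
    using swap_index_swap_index[of _ n m] by (simp add: mult.commute)
  show "swap_index m n ` {..<m * n} \<subseteq> {..<m * n}"
    using swap_index_less by blast
  show "swap_index n m ` {..<m * n} \<subseteq> {..<m * n}"
    using swap_index_less[of _ n m] by (auto simp: mult.commute)
qed

lemma reindexed_companion_mat_in_BCM:
  assumes m: "0 < m" and n: "0 < n"
  shows "mat (m * n) (m * n) (\<lambda>(i, j). companion_mat (m * n) c $$ (swap_index m n i, swap_index m n j))
    \<in> BCM m n"
proof -
  let ?N = "m * n" and ?C = "companion_mat (m * n) c" and ?s = "swap_index m n"
  define blocks where "blocks k = mat m m (\<lambda>(a, t). ?C $$ (?s (k * m + a), ?s ((n - 1) * m + t)))" for k
  have "mat ?N ?N (\<lambda>(i, j). ?C $$ (?s i, ?s j)) = block_companion m n blocks"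
  proof (rule eq_matI)
    fix i j assume "i < dim_row (block_companion m n blocks)" "j < dim_col (block_companion m n blocks)"
    then have i: "i < ?N" and j: "j < ?N" by (simp_all add: block_companion_def)
    have i_div: "i div m < n" and j_div: "j div m < n"
      using i j by (simp_all add: less_mult_imp_div_less mult.commute)
    have s_less: "?s i < ?N" "?s j < ?N" using i j by (simp_all add: swap_index_less)
    show "mat ?N ?N (\<lambda>(i, j). ?C $$ (?s i, ?s j)) $$ (i, j) = block_companion m n blocks $$ (i, j)"
    proof (cases "j div m = n - 1")
      case True
      then have "(n - 1) * m + j mod m = j" by (metis div_mult_mod_eq)
      then show ?thesis
        using True i j m by (simp add: block_companion_def blocks_def)
    next
      case False
      txt \<open>Column swap_index m n j of the companion matrix is not its last one, so its only
        nonzero entry is the 1 in row (j mod m) * n + (j div m + 1).\<close>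
      then have j_div': "j div m + 1 < n" using j_div by linarith
      have "?N - 1 = (m - 1) * n + (n - 1)"
        using m n by (simp add: algebra_simps diff_mult_distrib)
      moreover have "?s j \<noteq> (m - 1) * n + (n - 1)"
        unfolding swap_index_def using j_div n False by (subst mult_add_eq_mult_add_iff) auto
      ultimately have "?s j \<noteq> ?N - 1" by simp
      moreover have "?s i = ?s j + 1 \<longleftrightarrow> i mod m = j mod m \<and> i div m = j div m + 1"
        using mult_add_eq_mult_add_iff[OF i_div j_div', of "i mod m" "j mod m"]
        by (simp add: swap_index_def)
      ultimately show ?thesis
        using False i j s_less by (auto simp: block_companion_def companion_mat_def)
    qed
  qed (simp_all add: block_companion_def)
  moreover have "\<forall>k<n. blocks k \<in> carrier_mat m m" by (simp add: blocks_def)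
  ultimately show ?thesis unfolding BCM_def by blast
qed

theorem theorem6p1:
  fixes f :: "'a::{field,finite} poly" and m n :: nat
  assumes "0 < m" and "0 < n"
    and "primitive_poly f (m * n)"
  shows "\<exists>T :: 'a mat. T \<in> BCM m n \<and> invertible_mat T \<and>
           mat_order T = card (UNIV :: 'a set) ^ (m * n) - 1 \<and> char_poly T = f"
proof -
  let ?N = "m * n"
  from assms(3) have monic: "monic f" and deg: "degree f = ?N" and f0: "poly f 0 \<noteq> 0"
    and least: "(LEAST e. 0 < e \<and> f dvd monom 1 e - 1) = card (UNIV :: 'a set) ^ ?N - 1"
    unfolding primitive_poly_def by auto
  have deg_pos: "0 < degree f" using deg assms(1,2) by simp
  define C where "C = companion_mat ?N (coeff f)"
  define T where "T = mat ?N ?N (\<lambda>(i, j). C $$ (swap_index m n i, swap_index m n j))"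
  have sim: "similar_mat T C"
    unfolding T_def C_def by (rule similar_mat_reindex[OF companion_mat_carrier bij_betw_swap_index])
  have "T \<in> BCM m n"
    unfolding T_def C_def using assms(1,2) by (rule reindexed_companion_mat_in_BCM)
  moreover have char_poly_T: "char_poly T = f"
    using char_poly_similar[OF sim] char_poly_companion_mat_poly[OF monic deg_pos]
    by (simp add: C_def deg)
  moreover have "invertible_mat T"
    using invertible_mat_if_char_poly_nonzero_at_0[of T ?N] char_poly_T f0 by (simp add: T_def)
  moreover have "mat_order T = card (UNIV :: 'a set) ^ ?N - 1"
    using mat_order_similar[OF sim] mat_order_companion_mat[OF monic deg_pos] least
    by (simp add: C_def deg)
  ultimately show ?thesis by blast
qed

end
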